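(* The $\sigma$-algebra $\mathcal{M}$ of $\mu$-measurable subsets of $\mathbb{R}_{>0}$ coincides with the $\sigma$-algebra of Lebesgue measurable subsets of $\mathbb{R}_{>0}$, and for every $E\in\mathcal{M}$, $$\mu(E)=\exp\Big(\int_E\frac{dx}{x}\Big)$$ (with the convention $\exp(+\infty)=+\infty$).
   Context: $\mathbb{R}_{>0}=(0,\infty)$ carries the usual topology. For a closed interval $I=[a,b]$ with $0<a<b<\infty$, set $\ell(I)=b\cdot a^{-1}$. A cover of a set $E\subseteq\mathbb{R}_{>0}$ is a countable collection $S$ of closed intervals $[a,b]$ with $0<a<b<\infty$ such that $E\subseteq\bigcup_{I\in S}I$; set $\nu(S)=\prod_{I\in S}\ell(I)\in[1,+\infty]$ (a product of factors $\ge1$, equal to the supremum of its finite partial products, independent of ordering). The exterior measure of $E\subseteq\mathbb{R}_{>0}$ is $\mu_e(E)=\inf_S \nu(S)$, the infimum over all covers $S$ of $E$. A set $E\subseteq\mathbb{R}_{>0}$ is $\mu$-measurable if for every $\epsilon>0$ there is an open set $G\subseteq\mathbb{R}_{>0}$ with $E\subseteq G$ and $\mu_e(G\setminus E)<1+\epsilon$; for such $E$, $\mu(E):=\mu_e(E)$, and $\mathcal{M}$ denotes the collection of $\mu$-measurable sets. *)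

theory Defs
  imports "HOL-Analysis.Analysis"
begin

text \<open>A closed interval [a,b] with 0 < a < b < infinity is represented by the pair (a,b).\<close>

definition ell :: "real \<times> real \<Rightarrow> real" where
  "ell I = snd I / fst I"

definition is_cover :: "(real \<times> real) set \<Rightarrow> real set \<Rightarrow> bool" where
  "is_cover S E \<longleftrightarrow> countable S \<and> (\<forall>(a,b)\<in>S. 0 < a \<and> a < b)
      \<and> E \<subseteq> (\<Union>(a,b)\<in>S. {a..b})"

text \<open>nu(S): product of the lengths, i.e. the supremum of the finite partial products.\<close>
definition nu :: "(real \<times> real) set \<Rightarrow> ennreal" where
  "nu S = (SUP F \<in> {F. finite F \<and> F \<subseteq> S}. (\<Prod>I\<in>F. ennreal (ell I)))"

definition mu_e :: "real set \<Rightarrow> ennreal" where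
  "mu_e E = (INF S \<in> {S. is_cover S E}. nu S)"

definition mu_measurable :: "real set \<Rightarrow> bool" where
  "mu_measurable E \<longleftrightarrow> E \<subseteq> {0<..} \<and>
     (\<forall>\<epsilon>>0. \<exists>G. open G \<and> G \<subseteq> {0<..} \<and> E \<subseteq> G \<and> mu_e (G - E) < ennreal (1 + \<epsilon>))"

definition mu_sets :: "real set set" where
  "mu_sets = {E. mu_measurable E}"

definition mu :: "real set \<Rightarrow> ennreal" where
  "mu E = mu_e E"

definition ennexp :: "ennreal \<Rightarrow> ennreal" where
  "ennexp t = (if t = \<infinity> then \<infinity> else ennreal (exp (enn2real t)))"

end

theory Submission
  imports Defs
begin

(* The logarithm maps R_{>0} homeomorphically onto R and turns the multiplicative length
   b / a of [a, b] into the additive length of [ln a, ln b], so that nu S = exp (sum of the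
   lengths of the intervals [ln a, ln b]).  Hence mu_e E = exp (lambda* (ln ` E)) for the
   Lebesgue outer measure lambda*: a cover of E yields a cover of ln ` E, and conversely
   the components of an open neighbourhood of ln ` E give a cover of E.  Since exp is a
   homeomorphism, the condition defining mu-measurability becomes outer regularity of
   ln ` E, i.e. Lebesgue measurability, and the substitution y = ln x turns
   lambda (ln ` E) into the integral of 1 / x over E. *)

section \<open>Exponential of extended reals and products of lengths\<close>

lemma ennexp_ennreal: "0 \<le> r \<Longrightarrow> ennexp (ennreal r) = ennreal (exp r)"
  by (simp add: ennexp_def)

lemma ennexp_less_ennreal_exp_iff: "ennexp t < ennreal (exp e) \<longleftrightarrow> t < ennreal e"
proof (cases t rule: ennreal_cases)
  case (real r)
  then show ?thesis
    by (cases "0 \<le> e") (auto simp: ennexp_def ennreal_less_iff ennreal_neg)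
qed (simp add: ennexp_def)

lemma ennexp_le_ennreal_exp_iff: "0 \<le> e \<Longrightarrow> ennexp t \<le> ennreal (exp e) \<longleftrightarrow> t \<le> ennreal e"
  by (cases t rule: ennreal_cases) (auto simp: ennexp_def top_unique)

lemma is_cover_pos:
  assumes "is_cover S E" "p \<in> S"
  shows "0 < fst p" "fst p < snd p"
  using assms by (auto simp: is_cover_def case_prod_beta)

lemma is_cover_ell_pos: "is_cover S E \<Longrightarrow> p \<in> S \<Longrightarrow> 0 < ell p"
  using is_cover_pos[of S E p] by (simp add: ell_def)

lemma is_cover_subset: "is_cover S A \<Longrightarrow> E \<subseteq> A \<Longrightarrow> is_cover S E"
  by (auto simp: is_cover_def)

lemma nu_le_iff:
  "nu S \<le> x \<longleftrightarrow> (\<forall>F. finite F \<and> F \<subseteq> S \<longrightarrow> (\<Prod>I\<in>F. ennreal (ell I)) \<le> x)"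
  by (auto simp: nu_def SUP_le_iff)

lemma prod_ell_le_nu:
  assumes S: "is_cover S E" and F: "finite F" "F \<subseteq> S"
  shows "ennreal (\<Prod>I\<in>F. ell I) \<le> nu S"
proof -
  have "ennreal (\<Prod>I\<in>F. ell I) = (\<Prod>I\<in>F. ennreal (ell I))"
    using F is_cover_ell_pos[OF S] by (intro prod_ennreal[symmetric]) (auto intro: less_imp_le)
  also have "\<dots> \<le> nu S"
    using F nu_le_iff[of S "nu S"] by simp
  finally show ?thesis .
qed

lemma mu_e_le_nu: "is_cover S E \<Longrightarrow> mu_e E \<le> nu S"
  unfolding mu_e_def by (rule INF_lower) simp

lemma exp_ln_image: "E \<subseteq> {0<..} \<Longrightarrow> exp ` ln ` E = (E :: real set)"
  by (force simp: image_iff)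

section \<open>Lebesgue measure on the real line\<close>

lemma bdd_interval_of_finite_measure:
  fixes C :: "real set"
  assumes C: "is_interval C" "C \<in> sets lebesgue" "emeasure lebesgue C < \<infinity>"
  shows "bdd_above C \<and> bdd_below C"
proof -
  have short: "n \<le> measure lebesgue C" if "{c..c + n} \<subseteq> C" "0 \<le> n" for c n
  proof -
    have "ennreal n \<le> emeasure lebesgue C"
      using that C(2) emeasure_mono[of "{c..c + n}" C lebesgue] by simp
    also have "\<dots> = ennreal (measure lebesgue C)"
      using C(2,3) by (simp add: emeasure_eq_measure2 fmeasurableI)
    finally show ?thesis
      by (simp add: ennreal_le_iff)
  qed
  define n where "n = measure lebesgue C + 1"
  have no_room: "\<not> {c..c + n} \<subseteq> C" for c
    using short[of c n] measure_nonneg[of lebesgue C] by (auto simp: n_def)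
  have interval: "{a..b} \<subseteq> C" if "a \<in> C" "b \<in> C" for a b
    using C(1) that unfolding is_interval_1 by (meson atLeastAtMost_iff subsetI)
  show ?thesis
  proof
    show "bdd_above C"
    proof (rule ccontr)
      assume unbdd: "\<not> bdd_above C"
      then obtain c where "c \<in> C"
        by (metis all_not_in_conv bdd_above_empty)
      moreover obtain y where "y \<in> C" "c + n < y"
        using unbdd unfolding bdd_above_def by (meson not_le)
      ultimately have "{c..c + n} \<subseteq> C"
        using interval[of c y] atLeastatMost_subset_iff[of c "c + n" c y] by auto
      with no_room show False
        by blast
    qed
    show "bdd_below C"
    proof (rule ccontr)
      assume unbdd: "\<not> bdd_below C"
      then obtain c where "c \<in> C"
        by (metis all_not_in_conv bdd_below_empty)
      moreover obtain y where "y \<in> C" "y < c - n"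
        using unbdd unfolding bdd_below_def by (meson not_le)
      ultimately have "{y..y + n} \<subseteq> C"
        using interval[of y c] atLeastatMost_subset_iff[of y "y + n" y c] by auto
      with no_room show False
        by blast
    qed
  qed
qed

lemma open_interval_eq_Ioo:
  fixes C :: "real set"
  assumes C: "open C" "is_interval C" "bdd_above C" "bdd_below C" "C \<noteq> {}"
  shows "C = {Inf C<..<Sup C}"
proof
  show "{Inf C<..<Sup C} \<subseteq> C"
  proof
    fix x assume "x \<in> {Inf C<..<Sup C}"
    then obtain a b where "a \<in> C" "a < x" "b \<in> C" "x < b"
      using cInf_less_iff[OF C(5,4)] less_cSup_iff[OF C(5,3)] by auto
    then show "x \<in> C"
      using C(2) unfolding is_interval_1 by (meson less_imp_le)
  qed
  show "C \<subseteq> {Inf C<..<Sup C}"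
  proof
    fix x assume "x \<in> C"
    then obtain e where "e > 0" "ball x e \<subseteq> C"
      using C(1) open_contains_ball by blast
    then have "x - e/2 \<in> C" "x + e/2 \<in> C"
      by (auto simp: dist_real_def)
    then have "Inf C \<le> x - e/2" "x + e/2 \<le> Sup C"
      using C(3,4) by (auto intro: cInf_lower cSup_upper)
    then show "x \<in> {Inf C<..<Sup C}"
      using \<open>e > 0\<close> by auto
  qed
qed

lemma component_of_finite_measure_eq_Ioo:
  fixes U C :: "real set"
  assumes U: "open U" "emeasure lebesgue U < \<infinity>" and C: "C \<in> components U"
  shows "C = {Inf C<..<Sup C}" "Inf C < Sup C"
proof -
  have "open C"
    using open_components[OF U(1) C] .
  then have C_sets: "C \<in> sets lebesgue"
    by (simp add: borel_open)
  have "emeasure lebesgue C \<le> emeasure lebesgue U"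
    using in_components_subset[OF C] U(1) by (intro emeasure_mono) (simp_all add: borel_open)
  then have "emeasure lebesgue C < \<infinity>"
    using U(2) by (rule le_less_trans)
  moreover have "is_interval C"
    using in_components_connected[OF C] is_interval_connected_1 by blast
  ultimately have "bdd_above C \<and> bdd_below C"
    using C_sets by (intro bdd_interval_of_finite_measure)
  then show C_eq: "C = {Inf C<..<Sup C}"
    using open_interval_eq_Ioo \<open>open C\<close> \<open>is_interval C\<close> in_components_nonempty[OF C] by blast
  then show "Inf C < Sup C"
    using in_components_nonempty[OF C] greaterThanLessThan_empty_iff not_le by metis
qed

lemma sum_component_lengths_le_measure:
  fixes U :: "real set"
  assumes U: "open U" "emeasure lebesgue U < \<infinity>" and F: "F \<subseteq> components U" "finite F"
  shows "(\<Sum>C\<in>F. Sup C - Inf C) \<le> measure lebesgue U"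
proof -
  note Ioo = component_of_finite_measure_eq_Ioo[OF U]
  have U_fin: "U \<in> fmeasurable lebesgue"
    using U by (auto simp: fmeasurable_def borel_open)
  have C_fin: "C \<in> fmeasurable lebesgue" if "C \<in> F" for C
  proof -
    have C: "C \<in> components U"
      using that F(1) by blast
    show ?thesis
      by (rule fmeasurableI2[OF U_fin in_components_subset[OF C]])
         (simp add: borel_open open_components[OF U(1) C])
  qed
  have measure_C: "measure lebesgue C = Sup C - Inf C" if "C \<in> components U" for C
  proof -
    have "measure lebesgue C = measure lebesgue {Inf C<..<Sup C}"
      using Ioo(1)[OF that] by (rule arg_cong)
    also have "\<dots> = Sup C - Inf C"
      using Ioo(2)[OF that] by simp
    finally show ?thesis .
  qed
  have "(\<Sum>C\<in>F. Sup C - Inf C) = (\<Sum>C\<in>F. measure lebesgue C)"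
    using F(1) measure_C by (intro sum.cong) auto
  also have "\<dots> = measure lebesgue (\<Union>F)"
    using F(2) C_fin pairwise_subset[OF pairwise_disjoint_components F(1)]
    by (intro measure_Union'[symmetric]) (simp_all add: disjnt_def[abs_def])
  also have "\<dots> \<le> measure lebesgue U"
    using F C_fin U_fin
    by (intro measure_mono_fmeasurable sets.finite_Union) (auto dest: in_components_subset)
  finally show ?thesis .
qed

lemma outer_measure_of_lebesgue_open_approx:
  fixes A :: "'a::euclidean_space set" and e :: real
  assumes "e > 0"
  obtains T where "open T" "A \<subseteq> T" "emeasure lebesgue T \<le> outer_measure_of lebesgue A + ennreal e"
proof -
  obtain B where B: "B \<in> sets lebesgue" "A \<subseteq> B" "outer_measure_of lebesgue A = emeasure lebesgue B"
    using outer_measure_of_attain[of A lebesgue] by auto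
  obtain T where T: "open T" "B \<subseteq> T" "T - B \<in> lmeasurable" "emeasure lebesgue (T - B) < ennreal e"
    using sets_lebesgue_outer_open[OF B(1) assms] by blast
  have "emeasure lebesgue T = emeasure lebesgue (B \<union> (T - B))"
    using T(2) by (simp add: Un_absorb1)
  also have "\<dots> \<le> emeasure lebesgue B + emeasure lebesgue (T - B)"
    using B(1) T(3) by (intro emeasure_subadditive) auto
  also have "\<dots> \<le> outer_measure_of lebesgue A + ennreal e"
    using B(3) T(4) by (simp add: add_left_mono less_imp_le)
  finally show thesis
    using that T(1,2) B(2) by blast
qed

lemma sets_lebesgue_iff_outer_open:
  fixes A :: "'a::euclidean_space set"
  shows "A \<in> sets lebesgue \<longleftrightarrow>
    (\<forall>e>0. \<exists>V. open V \<and> A \<subseteq> V \<and> outer_measure_of lebesgue (V - A) < ennreal e)"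
proof
  assume "A \<in> sets lebesgue"
  then show "\<forall>e>0. \<exists>V. open V \<and> A \<subseteq> V \<and> outer_measure_of lebesgue (V - A) < ennreal e"
    by (metis sets_lebesgue_outer_open fmeasurableD outer_measure_of_eq)
next
  assume "\<forall>e>0. \<exists>V. open V \<and> A \<subseteq> V \<and> outer_measure_of lebesgue (V - A) < ennreal e"
  then have "\<forall>n. \<exists>V. open V \<and> A \<subseteq> V \<and> outer_measure_of lebesgue (V - A) < ennreal (1 / Suc n)"
    by simp
  then obtain V where V: "\<And>n. open (V n)" "\<And>n. A \<subseteq> V n"
    "\<And>n. outer_measure_of lebesgue (V n - A) < ennreal (1 / Suc n)"
    by metis
  define W where "W = (\<Inter>n. V n)"
  have W: "W \<in> sets lebesgue" "A \<subseteq> W"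
    using V(1,2) by (auto simp: W_def borel_open)
  have "outer_measure_of lebesgue (W - A) \<le> 0"
  proof (rule ennreal_le_epsilon)
    fix e :: real assume "0 < e"
    then obtain n where n: "1 / Suc n < e"
      by (metis nat_approx_posE)
    have "outer_measure_of lebesgue (W - A) \<le> outer_measure_of lebesgue (V n - A)"
      by (rule outer_measure_of_mono) (auto simp: W_def)
    also have "\<dots> \<le> ennreal e"
      using V(3)[of n] n by (meson ennreal_leI less_imp_le order.strict_trans2)
    finally show "outer_measure_of lebesgue (W - A) \<le> 0 + ennreal e"
      by simp
  qed
  moreover obtain B where "B \<in> sets lebesgue" "W - A \<subseteq> B"
    "outer_measure_of lebesgue (W - A) = emeasure lebesgue B"
    using outer_measure_of_attain[of "W - A" lebesgue] by auto
  ultimately have "W - A \<in> null_sets lebesgue"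
    by (metis le_zero_eq null_setsI null_sets_completion_subset)
  then have "W - (W - A) \<in> sets lebesgue"
    using W(1) by auto
  moreover have "W - (W - A) = A"
    using W(2) by auto
  ultimately show "A \<in> sets lebesgue"
    by simp
qed

lemma set_nn_integral_lebesgue_eq_ennreal_iff:
  fixes f :: "'a::euclidean_space \<Rightarrow> real"
  assumes f: "set_borel_measurable lebesgue A f" "\<And>x. x \<in> A \<Longrightarrow> 0 \<le> f x" and "0 \<le> r"
  shows "(\<integral>\<^sup>+x\<in>A. ennreal (f x) \<partial>lebesgue) = ennreal r \<longleftrightarrow> (f has_integral r) A"
proof -
  define g where "g x = (if x \<in> A then f x else 0)" for x
  have "g \<in> borel_measurable lebesgue"
    using f(1) unfolding set_borel_measurable_def g_def
    by (rule measurable_cong[THEN iffD1, rotated]) (simp add: indicator_def)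
  moreover have "(\<integral>\<^sup>+x. ennreal (g x) \<partial>lebesgue) = (\<integral>\<^sup>+x\<in>A. ennreal (f x) \<partial>lebesgue)"
    by (intro nn_integral_cong) (simp add: g_def indicator_def)
  moreover have "(f has_integral r) A \<longleftrightarrow> (g has_integral r) UNIV"
    unfolding g_def by (rule has_integral_restrict_UNIV[symmetric])
  moreover have "\<And>x. 0 \<le> g x"
    using f(2) by (simp add: g_def)
  ultimately show ?thesis
    using \<open>0 \<le> r\<close> by (simp add: has_integral_iff_nn_integral_lebesgue)
qed

lemma has_integral_iff_absolutely_integrable_nonneg:
  fixes f :: "'a::euclidean_space \<Rightarrow> real"
  assumes "\<And>x. x \<in> S \<Longrightarrow> 0 \<le> f x"
  shows "(f has_integral r) S \<longleftrightarrow> f absolutely_integrable_on S \<and> integral S f = r"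
  using absolutely_integrable_on_iff_nonneg[of S f] assms by (auto simp: has_integral_iff)

section \<open>The exterior measure through the logarithm\<close>

lemma is_cover_exp_components:
  fixes U :: "real set"
  assumes U: "open U" "emeasure lebesgue U < \<infinity>"
  shows "is_cover ((\<lambda>C. (exp (Inf C), exp (Sup C))) ` components U) (exp ` U)"
  unfolding is_cover_def
proof (intro conjI)
  note Ioo = component_of_finite_measure_eq_Ioo[OF U]
  have "countable (components U)"
    by (rule countable_disjoint_open_subsets)
       (auto simp: open_components[OF U(1)] pairwise_def disjnt_def components_nonoverlap)
  then show "countable ((\<lambda>C. (exp (Inf C), exp (Sup C))) ` components U)"
    by simp
  show "\<forall>(a, b)\<in>(\<lambda>C. (exp (Inf C), exp (Sup C))) ` components U. 0 < a \<and> a < b"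
    using Ioo(2) by auto
  show "exp ` U \<subseteq> (\<Union>(a, b)\<in>(\<lambda>C. (exp (Inf C), exp (Sup C))) ` components U. {a..b})"
  proof
    fix y assume "y \<in> exp ` U"
    then obtain x where "x \<in> U" "y = exp x"
      by blast
    then obtain C where C: "C \<in> components U" "x \<in> C"
      using Union_components[of U] by blast
    then have "Inf C < x" "x < Sup C"
      using Ioo(1)[OF C(1)] by (metis greaterThanLessThan_iff)+
    then have "y \<in> {exp (Inf C)..exp (Sup C)}"
      using \<open>y = exp x\<close> by simp
    with C(1) show "y \<in> (\<Union>(a, b)\<in>(\<lambda>C. (exp (Inf C), exp (Sup C))) ` components U. {a..b})"
      by blast
  qed
qed

lemma exp_image_open_cover:
  fixes U :: "real set"
  assumes U: "open U" "emeasure lebesgue U < \<infinity>"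
  shows "\<exists>S. is_cover S (exp ` U) \<and> nu S \<le> ennreal (exp (measure lebesgue U))"
proof -
  define g where "g C = (exp (Inf C), exp (Sup C))" for C :: "real set"
  note Ioo = component_of_finite_measure_eq_Ioo[OF U]
  have "inj_on g (components U)"
  proof (rule inj_onI)
    fix C D assume C: "C \<in> components U" and D: "D \<in> components U" and "g C = g D"
    then have "Inf C = Inf D" "Sup C = Sup D"
      by (simp_all add: g_def)
    have "C = {Inf C<..<Sup C}"
      using Ioo(1)[OF C] .
    also have "\<dots> = {Inf D<..<Sup D}"
      by (simp only: \<open>Inf C = Inf D\<close> \<open>Sup C = Sup D\<close>)
    also have "\<dots> = D"
      using Ioo(1)[OF D] by (rule sym)
    finally show "C = D" .
  qed
  have "nu (g ` components U) \<le> ennreal (exp (measure lebesgue U))"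
    unfolding nu_le_iff
  proof (intro allI impI)
    fix F assume "finite F \<and> F \<subseteq> g ` components U"
    then obtain F' where F': "F' \<subseteq> components U" "finite F'" "F = g ` F'"
      by (metis finite_subset_image)
    have "(\<Prod>I\<in>F. ennreal (ell I)) = (\<Prod>C\<in>F'. ennreal (ell (g C)))"
      using F'(3) inj_on_subset[OF \<open>inj_on g _\<close> F'(1)] by (simp add: prod.reindex)
    also have "\<dots> = (\<Prod>C\<in>F'. ennreal (exp (Sup C - Inf C)))"
      by (simp add: g_def ell_def exp_diff)
    also have "\<dots> = ennreal (exp (\<Sum>C\<in>F'. Sup C - Inf C))"
      using F'(2) by (simp add: prod_ennreal exp_sum)
    also have "\<dots> \<le> ennreal (exp (measure lebesgue U))"
      using sum_component_lengths_le_measure[OF U F'(1,2)] by (simp add: ennreal_leI)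
    finally show "(\<Prod>I\<in>F. ennreal (ell I)) \<le> ennreal (exp (measure lebesgue U))" .
  qed
  moreover have "is_cover (g ` components U) (exp ` U)"
    unfolding g_def using U by (rule is_cover_exp_components)
  ultimately show ?thesis
    by blast
qed

lemma mu_e_le_exp_measure_open:
  fixes E T :: "real set"
  assumes E: "E \<subseteq> {0<..}" and T: "open T" "ln ` E \<subseteq> T" "emeasure lebesgue T < \<infinity>"
  shows "mu_e E \<le> ennreal (exp (measure lebesgue T))"
proof -
  obtain S where S: "is_cover S (exp ` T)" "nu S \<le> ennreal (exp (measure lebesgue T))"
    using exp_image_open_cover[OF T(1,3)] by blast
  have "E \<subseteq> exp ` T"
    using exp_ln_image[OF E] T(2) by blast
  with S(1) have "mu_e E \<le> nu S"
    by (blast intro: mu_e_le_nu[OF is_cover_subset])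
  also have "\<dots> \<le> ennreal (exp (measure lebesgue T))"
    by (fact S(2))
  finally show ?thesis .
qed

lemma mu_e_le_ennexp_outer_measure_ln:
  fixes E :: "real set"
  assumes E: "E \<subseteq> {0<..}"
  shows "mu_e E \<le> ennexp (outer_measure_of lebesgue (ln ` E))"
proof (cases "outer_measure_of lebesgue (ln ` E)" rule: ennreal_cases)
  case (real r)
  have "mu_e E \<le> ennreal (exp r) + ennreal e" if "0 < e" for e
  proof -
    define d where "d = ln (1 + e / exp r)"
    have "1 < 1 + e / exp r"
      using \<open>0 < e\<close> by simp
    then have "d > 0" and "exp d = 1 + e / exp r"
      by (simp_all add: d_def ln_gt_zero)
    then have exp_rd: "exp (r + d) = exp r + e"
      by (simp add: exp_add field_simps)
    obtain T where T: "open T" "ln ` E \<subseteq> T"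
      and "emeasure lebesgue T \<le> outer_measure_of lebesgue (ln ` E) + ennreal d"
      using outer_measure_of_lebesgue_open_approx[OF \<open>d > 0\<close>] by blast
    note \<open>emeasure lebesgue T \<le> _\<close>
    also have "\<dots> = ennreal (r + d)"
      using real \<open>d > 0\<close> by (simp add: ennreal_plus)
    finally have T_le: "emeasure lebesgue T \<le> ennreal (r + d)" .
    then have T_fin: "emeasure lebesgue T < \<infinity>"
      by (rule le_less_trans) simp
    have "measure lebesgue T = enn2real (emeasure lebesgue T)"
      by (simp add: measure_def)
    also have "\<dots> \<le> enn2real (ennreal (r + d))"
      by (rule enn2real_mono[OF T_le]) simp
    also have "\<dots> = r + d"
      using real \<open>d > 0\<close> by (intro enn2real_ennreal) simp
    finally have measure_T: "measure lebesgue T \<le> r + d" .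
    have "mu_e E \<le> ennreal (exp (measure lebesgue T))"
      using E T T_fin by (rule mu_e_le_exp_measure_open)
    also have "\<dots> \<le> ennreal (exp (r + d))"
      using measure_T by (simp add: ennreal_leI)
    finally show ?thesis
      using exp_rd \<open>0 < e\<close> by (simp add: ennreal_plus)
  qed
  then show ?thesis
    using real by (simp add: ennexp_ennreal ennreal_le_epsilon)
qed (simp add: ennexp_def)

lemma measure_ln_intervals_le_ln_nu:
  assumes S: "is_cover S E" and c: "nu S = ennreal c" and F: "F \<subseteq> S" "finite F"
  shows "measure lebesgue (\<Union>p\<in>F. {ln (fst p)..ln (snd p)}) \<le> ln c"
proof -
  note ell_pos = is_cover_ell_pos[OF S]
  have "measure lebesgue (\<Union>p\<in>F. {ln (fst p)..ln (snd p)}) \<le>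
      (\<Sum>p\<in>F. measure lebesgue {ln (fst p)..ln (snd p)})"
    using F by (intro measure_UNION_le) auto
  also have "\<dots> = (\<Sum>p\<in>F. ln (ell p))"
  proof (intro sum.cong refl)
    fix p assume "p \<in> F"
    then have "0 < fst p" "fst p < snd p"
      using is_cover_pos[OF S] F(1) by blast+
    then show "measure lebesgue {ln (fst p)..ln (snd p)} = ln (ell p)"
      by (simp add: ell_def ln_div)
  qed
  also have "\<dots> = ln (\<Prod>p\<in>F. ell p)"
    using F ell_pos by (intro ln_prod[symmetric]) (auto simp: less_imp_neq[symmetric])
  also have "\<dots> \<le> ln c"
  proof -
    have "0 < (\<Prod>p\<in>F. ell p)"
      using F ell_pos by (intro prod_pos) auto
    moreover have "(\<Prod>p\<in>F. ell p) \<le> c"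
      using prod_ell_le_nu[OF S F(2,1)] c calculation by (simp add: ennreal_le_iff2)
    ultimately show ?thesis
      by simp
  qed
  finally show ?thesis .
qed

lemma outer_measure_ln_le_ln_nu:
  fixes E :: "real set"
  assumes S: "is_cover S E" and c: "nu S = ennreal c"
  shows "outer_measure_of lebesgue (ln ` E) \<le> ennreal (ln c)"
proof -
  define A where "A p = {ln (fst p)..ln (snd p)}" for p :: "real \<times> real"
  note bound = measure_ln_intervals_le_ln_nu[OF S c, folded A_def]
  have A_fin: "(\<Union>p\<in>S. A p) \<in> lmeasurable" and measure_A: "measure lebesgue (\<Union>p\<in>S. A p) \<le> ln c"
    using S fmeasurable_UN_bound[OF _ _ bound] measure_UN_bound[OF _ _ bound]
    by (auto simp: is_cover_def A_def)
  have "ln ` E \<subseteq> (\<Union>p\<in>S. A p)"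
  proof
    fix y assume "y \<in> ln ` E"
    then obtain x where "x \<in> E" "y = ln x"
      by blast
    then obtain p where p: "p \<in> S" "fst p \<le> x" "x \<le> snd p"
      using S by (auto simp: is_cover_def)
    then have "y \<in> A p"
      using is_cover_pos[OF S p(1)] \<open>y = ln x\<close> by (simp add: A_def)
    with p(1) show "y \<in> (\<Union>p\<in>S. A p)"
      by blast
  qed
  then have "outer_measure_of lebesgue (ln ` E) \<le> emeasure lebesgue (\<Union>p\<in>S. A p)"
    using A_fin by (auto simp: outer_measure_of_def intro: INF_lower)
  also have "\<dots> \<le> ennreal (ln c)"
    using A_fin measure_A by (simp add: emeasure_eq_measure2 ennreal_leI)
  finally show ?thesis .
qed

lemma ennexp_outer_measure_ln_le_nu:
  fixes E :: "real set"
  assumes S: "is_cover S E"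
  shows "ennexp (outer_measure_of lebesgue (ln ` E)) \<le> nu S"
proof (cases "nu S" rule: ennreal_cases)
  case (real c)
  have "1 \<le> c"
    using prod_ell_le_nu[OF S, of "{}"] real by simp
  moreover have "outer_measure_of lebesgue (ln ` E) \<le> ennreal (ln c)"
    using outer_measure_ln_le_ln_nu[OF S] real by simp
  ultimately show ?thesis
    using real ennexp_le_ennreal_exp_iff[of "ln c"] by simp
qed simp

lemma mu_e_eq_ennexp_outer_measure_ln:
  fixes E :: "real set"
  assumes "E \<subseteq> {0<..}"
  shows "mu_e E = ennexp (outer_measure_of lebesgue (ln ` E))"
proof (rule antisym)
  show "mu_e E \<le> ennexp (outer_measure_of lebesgue (ln ` E))"
    using assms by (rule mu_e_le_ennexp_outer_measure_ln)
  show "ennexp (outer_measure_of lebesgue (ln ` E)) \<le> mu_e E"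
    unfolding mu_e_def by (intro INF_greatest ennexp_outer_measure_ln_le_nu) simp
qed

section \<open>Measurable sets\<close>

lemma open_ln_image:
  assumes "open G" "G \<subseteq> {0<..}"
  shows "open (ln ` (G :: real set))"
proof -
  have "ln ` G = exp -` G"
    using assms(2) by (force simp: image_iff)
  then show ?thesis
    using assms(1) by (simp add: continuous_open_vimage)
qed

lemma open_exp_image:
  assumes "open V"
  shows "open (exp ` (V :: real set))"
proof -
  have "exp ` V = ln -` V \<inter> {0<..}"
    by (force simp: image_iff)
  moreover have "continuous_on {0<..} (ln :: real \<Rightarrow> real)"
    by (intro continuous_intros) auto
  ultimately show ?thesis
    using assms continuous_on_open_vimage[OF open_greaterThan] by metis
qed

lemma mu_e_diff_eq_ennexp_outer_measure_ln:
  fixes E G :: "real set"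
  assumes "E \<subseteq> G" "G \<subseteq> {0<..}"
  shows "mu_e (G - E) = ennexp (outer_measure_of lebesgue (ln ` G - ln ` E))"
proof -
  have "ln ` (G - E) = ln ` G - ln ` E"
    using assms by (intro inj_on_image_set_diff[of ln "{0<..}"]) (auto simp: inj_on_def)
  moreover have "G - E \<subseteq> {0<..}"
    using assms(2) by blast
  ultimately show ?thesis
    by (simp add: mu_e_eq_ennexp_outer_measure_ln)
qed

lemma mu_measurable_iff_outer_open_ln:
  fixes E :: "real set"
  assumes E: "E \<subseteq> {0<..}"
  shows "mu_measurable E \<longleftrightarrow>
    (\<forall>e>0. \<exists>V. open V \<and> ln ` E \<subseteq> V \<and> outer_measure_of lebesgue (V - ln ` E) < ennreal e)"
proof
  assume M: "mu_measurable E"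
  show "\<forall>e>0. \<exists>V. open V \<and> ln ` E \<subseteq> V \<and> outer_measure_of lebesgue (V - ln ` E) < ennreal e"
  proof (intro allI impI)
    fix e :: real assume "e > 0"
    then have "exp e - 1 > 0"
      by simp
    then obtain G where G: "open G" "G \<subseteq> {0<..}" "E \<subseteq> G"
      and "mu_e (G - E) < ennreal (1 + (exp e - 1))"
      using M unfolding mu_measurable_def by blast
    then have "outer_measure_of lebesgue (ln ` G - ln ` E) < ennreal e"
      by (simp add: mu_e_diff_eq_ennexp_outer_measure_ln ennexp_less_ennreal_exp_iff)
    then show "\<exists>V. open V \<and> ln ` E \<subseteq> V \<and> outer_measure_of lebesgue (V - ln ` E) < ennreal e"
      using open_ln_image[OF G(1,2)] G(3) by blast
  qed
next
  assume L: "\<forall>e>0. \<exists>V. open V \<and> ln ` E \<subseteq> V \<and> outer_measure_of lebesgue (V - ln ` E) < ennreal e"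
  show "mu_measurable E"
    unfolding mu_measurable_def
  proof (intro conjI allI impI E)
    fix \<epsilon> :: real assume "\<epsilon> > 0"
    then have "ln (1 + \<epsilon>) > 0"
      by simp
    then obtain V where V: "open V" "ln ` E \<subseteq> V"
      "outer_measure_of lebesgue (V - ln ` E) < ennreal (ln (1 + \<epsilon>))"
      using L by blast
    have G: "open (exp ` V)" "exp ` V \<subseteq> {0<..}" "E \<subseteq> exp ` V"
      using open_exp_image[OF V(1)] image_mono[OF V(2), of exp] exp_ln_image[OF E] by auto
    have "ln ` exp ` V = V"
      by (force simp: image_iff)
    then have "mu_e (exp ` V - E) < ennreal (exp (ln (1 + \<epsilon>)))"
      using V(3) G(2,3) by (simp add: mu_e_diff_eq_ennexp_outer_measure_ln ennexp_less_ennreal_exp_iff)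
    then show "\<exists>G. open G \<and> G \<subseteq> {0<..} \<and> E \<subseteq> G \<and> mu_e (G - E) < ennreal (1 + \<epsilon>)"
      using G \<open>\<epsilon> > 0\<close> by auto
  qed
qed

lemma mu_measurable_iff_sets_lebesgue_ln:
  "mu_measurable E \<longleftrightarrow> E \<subseteq> {0<..} \<and> ln ` E \<in> sets lebesgue"
proof (cases "E \<subseteq> {0<..}")
  case True
  then show ?thesis
    by (simp add: mu_measurable_iff_outer_open_ln sets_lebesgue_iff_outer_open)
qed (simp add: mu_measurable_def)

lemma ln_image_in_sets_lebesgue_iff:
  fixes E :: "real set"
  assumes E: "E \<subseteq> {0<..}"
  shows "ln ` E \<in> sets lebesgue \<longleftrightarrow> E \<in> sets lebesgue"
proof
  assume "ln ` E \<in> sets lebesgue"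
  moreover have "exp differentiable at y" for y :: real
    using DERIV_exp[of y] by (metis field_differentiable_def field_differentiable_imp_differentiable)
  ultimately have "exp ` ln ` E \<in> sets lebesgue"
    by (auto intro!: differentiable_image_in_sets_lebesgue differentiable_at_imp_differentiable_on)
  then show "E \<in> sets lebesgue"
    using exp_ln_image[OF E] by simp
next
  assume "E \<in> sets lebesgue"
  moreover have "ln differentiable at x" if "x \<in> E" for x
    using E that DERIV_ln[of x]
    by (metis field_differentiable_def field_differentiable_imp_differentiable greaterThan_iff subsetD)
  ultimately show "ln ` E \<in> sets lebesgue"
    by (auto intro!: differentiable_image_in_sets_lebesgue differentiable_at_imp_differentiable_on)
qed

section \<open>The density 1/x\<close>

lemma set_nn_integral_inverse_eq_emeasure_ln_image:
  fixes E :: "real set"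
  assumes E: "E \<in> sets lebesgue" "E \<subseteq> {0<..}"
  shows "(\<integral>\<^sup>+x\<in>E. ennreal (1 / x) \<partial>lebesgue) = emeasure lebesgue (ln ` E)"
proof -
  have lnE: "ln ` E \<in> sets lebesgue"
    using E ln_image_in_sets_lebesgue_iff by blast
  have inverse_measurable: "set_borel_measurable lebesgue E (\<lambda>x. 1 / x)"
    unfolding set_borel_measurable_def
    by (intro borel_measurable_scaleR borel_measurable_indicator E(1) measurable_completion) simp
  have deriv: "(ln has_field_derivative 1 / x) (at x within E)" if "x \<in> E" for x
    using that E(2) by (auto intro!: derivative_eq_intros)
  have "inj_on ln E"
    using E(2) by (intro inj_onI) (metis exp_ln greaterThan_iff subsetD)
  have same_finite_values:
    "(\<integral>\<^sup>+x\<in>E. ennreal (1 / x) \<partial>lebesgue) = ennreal r \<longleftrightarrow> emeasure lebesgue (ln ` E) = ennreal r"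
    if "0 \<le> r" for r
  proof -
    have "(\<integral>\<^sup>+x\<in>E. ennreal (1 / x) \<partial>lebesgue) = ennreal r \<longleftrightarrow> ((\<lambda>x. 1 / x) has_integral r) E"
      using inverse_measurable that E(2) by (intro set_nn_integral_lebesgue_eq_ennreal_iff) auto
    also have "\<dots> \<longleftrightarrow> ((\<lambda>x. \<bar>1 / x\<bar> *\<^sub>R (1::real)) has_integral r) E"
      using E(2) by (intro has_integral_cong) auto
    also have "\<dots> \<longleftrightarrow> (\<lambda>x. \<bar>1 / x\<bar> *\<^sub>R (1::real)) absolutely_integrable_on E \<and>
        integral E (\<lambda>x. \<bar>1 / x\<bar> *\<^sub>R (1::real)) = r"
      using has_integral_iff_absolutely_integrable_nonneg[of E "\<lambda>x. \<bar>1 / x\<bar> *\<^sub>R (1::real)" r] by simp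
    also have "\<dots> \<longleftrightarrow> (\<lambda>_. 1::real) absolutely_integrable_on ln ` E \<and> integral (ln ` E) (\<lambda>_. 1::real) = r"
      by (rule has_absolute_integral_change_of_variables_real[OF E(1) deriv \<open>inj_on ln E\<close>])
    also have "\<dots> \<longleftrightarrow> ((\<lambda>_. 1::real) has_integral r) (ln ` E)"
      using has_integral_iff_absolutely_integrable_nonneg[of "ln ` E" "\<lambda>_. 1" r] by simp
    also have "\<dots> \<longleftrightarrow> (\<integral>\<^sup>+x\<in>ln ` E. ennreal 1 \<partial>lebesgue) = ennreal r"
      using that lnE
      by (intro set_nn_integral_lebesgue_eq_ennreal_iff[symmetric])
         (auto simp: set_borel_measurable_def borel_measurable_indicator)
    finally show ?thesis
      using lnE by simp
  qed
  \<comment> \<open>Agreeing on all finite values, the two sides are also infinite together.\<close>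
  show ?thesis
  proof (cases "emeasure lebesgue (ln ` E)" rule: ennreal_cases)
    case (real r)
    then show ?thesis
      using same_finite_values by simp
  next
    case top
    then show ?thesis
      using same_finite_values
      by (cases "\<integral>\<^sup>+x\<in>E. ennreal (1 / x) \<partial>lebesgue" rule: ennreal_cases) auto
  qed
qed

theorem mainTheorem19:
  shows "mu_sets = {E. E \<subseteq> {0<..} \<and> E \<in> sets lebesgue} \<and>
    (\<forall>E\<in>mu_sets. mu E = ennexp (\<integral>\<^sup>+ x\<in>E. ennreal (1 / x) \<partial>lebesgue))"
proof -
  have sets_eq: "E \<in> mu_sets \<longleftrightarrow> E \<subseteq> {0<..} \<and> E \<in> sets lebesgue" for E
    by (auto simp: mu_sets_def mu_measurable_iff_sets_lebesgue_ln ln_image_in_sets_lebesgue_iff)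
  moreover have "mu E = ennexp (\<integral>\<^sup>+ x\<in>E. ennreal (1 / x) \<partial>lebesgue)" if "E \<in> mu_sets" for E
  proof -
    have E: "E \<subseteq> {0<..}" "E \<in> sets lebesgue"
      using that sets_eq by auto
    then have "ln ` E \<in> sets lebesgue"
      by (simp add: ln_image_in_sets_lebesgue_iff)
    then show ?thesis
      using E by (simp add: mu_def mu_e_eq_ennexp_outer_measure_ln set_nn_integral_inverse_eq_emeasure_ln_image)
  qed
  ultimately show ?thesis
    by blast
qed

end
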